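(* Let $Q$ and $W$ satisfy the standing assumptions with $W=Y$, and let $l\ge1$. If $Q$ is future unique w.r.t. $I^l_l$, then $Q$ is domino consistent.
   Context: Strings and signals: $\diamond$ is a symbol not in any other set considered. For a set $A$ and $l\in\mathbb N_0$, $A^l$ is the set of strings of length $l$ over $A$, indexed $\zeta=\zeta(0)\cdots\zeta(l-1)$. For a map $w$ on $\mathbb Z$ (or a string) and integers $t_1\le t_2$, $w|_{[t_1,t_2]}=w(t_1)\cdots w(t_2)$ is the string of length $t_2-t_1+1$ (absolute time forgotten). For a set $\mathcal S$ of such maps, $\mathcal S|_{[t_1,t_2]}=\{s|_{[t_1,t_2]}:s\in\mathcal S\}$. State machines: a state machine is $Q=(X,U,Y,\delta,X_0)$ with $X_0\subseteq X$, $\delta\subseteq X\times U\times Y\times X$. Let $H_\delta(x)=\{y:\exists u,x'.\,(x,u,y,x')\in\delta\}$, $F_\delta(x,u)=\{x':\exists y\in H_\delta(x).\,(x,u,y,x')\in\delta\}$. The full behavior $\mathcal B_f(Q)$ is the set of $(\mu,\nu,\xi)\in(U\times Y\times X)^{\mathbb N_0}$ with $\xi(0)\in X_0$ and $(\xi(k),\mu(k),\nu(k),\xi(k+1))\in\delta$ for all $k\in\mathbb N_0$. $Q$ is live and reachable if every $x\in X_0$ is $\xi(0)$ for some $(\mu,\nu,\xi)\in\mathcal B_f(Q)$ and every $x\in X$ is $\xi(k)$ for some such trajectory and some $k$. Standing assumptions: $Q=(X,U,Y,\delta,X_0)$ is live and reachable and satisfies $(x,u,y,x')\in\delta\iff(x'\in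 F_\delta(x,u)\wedge y\in H_\delta(x))$ for all $x,x'\in X,u\in U,y\in Y$; the external signal space $W$ is finite and either $W=U\times Y$ or $W=Y$ (here $W=Y$). Behaviors: $\mathcal B(Q)$ is the set of $w:\mathbb Z\to Y\cup\{\diamond\}$ such that for some $(\mu,\nu,\xi)\in\mathcal B_f(Q)$, $w(k)=\diamond$ for $k<0$ and $w(k)=\nu(k)$ for $k\ge0$. $\mathcal B_S(Q)$ is the set of pairs $(w,\xi)$ of maps on $\mathbb Z$ with $w(k)=\xi(k)=\diamond$ for $k<0$ and $(w(k),\xi(k))=(\nu(k),\xi'(k))$ for $k\ge0$, for some $(\mu,\nu,\xi')\in\mathcal B_f(Q)$. For a set $\mathcal B$ of maps on $\mathbb Z$, $\Pi_l(\mathcal B)=\bigcup_{k\in\mathbb N_0}\mathcal B|_{[k-l+1,k]}$. Corresponding strings: for integers $a,b$ and $x\in X$, $E^{[a,b]}(x)=\{\zeta:\exists(w,\xi)\in\mathcal B_S(Q),k\in\mathbb N_0:\ \xi(k)=x,\ \zeta=w|_{[k+a,k+b]}\}$. For $l,m\in\mathbb N_0$ with $m\le l$, $I^l_m=[m-l,m-1]$; in particular $I^l_l=[0,l-1]$. Future uniqueness: $Q$ is future unique w.r.t. $I^l_m$ if for all $x\in X$ and $\zeta,\zeta'\in E^{I^l_m}(x)$, $\zeta|_{[l-m,l-1]}=\zeta'|_{[l-m,l-1]}$. Quotient state space (for $W=Y$): $\hat X^{l\triangledown}=\{E^{I^l_l}(x):x\in X\}$. Domino consistency (for $W=Y$):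 $Q$ is domino consistent if for all $\zeta\in\Pi_{l+1}(\mathcal B(Q))$ and all $\hat y\in\hat X^{l\triangledown}$ with $\zeta|_{[0,l-1]}\in\hat y$ there exists $x\in X$ with $E^{I^l_l}(x)=\hat y$ and $\zeta\in E^{[0,l]}(x)$. *)

theory Defs
  imports Main
begin

text \<open>The symbol diamond is modelled by None; a value y of Y is Some y.
  Strings are lists, indexed from 0.  A state machine Q = (X,U,Y,delta,X0)
  is passed as its five components.\<close>

definition state_machine ::
  "'x set \<Rightarrow> 'u set \<Rightarrow> 'y set \<Rightarrow> ('x \<times> 'u \<times> 'y \<times> 'x) set \<Rightarrow> 'x set \<Rightarrow> bool" where
  "state_machine X U Y \<delta> X0 \<longleftrightarrow> X0 \<subseteq> X \<and> \<delta> \<subseteq> X \<times> U \<times> Y \<times> X"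

definition H_out :: "('x \<times> 'u \<times> 'y \<times> 'x) set \<Rightarrow> 'x \<Rightarrow> 'y set" where
  "H_out \<delta> x = {y. \<exists>u x'. (x, u, y, x') \<in> \<delta>}"

definition F_next :: "('x \<times> 'u \<times> 'y \<times> 'x) set \<Rightarrow> 'x \<Rightarrow> 'u \<Rightarrow> 'x set" where
  "F_next \<delta> x u = {x'. \<exists>y \<in> H_out \<delta> x. (x, u, y, x') \<in> \<delta>}"

definition full_behavior ::
  "'x set \<Rightarrow> 'u set \<Rightarrow> 'y set \<Rightarrow> ('x \<times> 'u \<times> 'y \<times> 'x) set \<Rightarrow> 'x set
   \<Rightarrow> ((nat \<Rightarrow> 'u) \<times> (nat \<Rightarrow> 'y) \<times> (nat \<Rightarrow> 'x)) set" where
  "full_behavior X U Y \<delta> X0 = {(\<mu>, \<nu>, \<xi>).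
     (\<forall>k. \<mu> k \<in> U \<and> \<nu> k \<in> Y \<and> \<xi> k \<in> X) \<and>
     \<xi> 0 \<in> X0 \<and> (\<forall>k. (\<xi> k, \<mu> k, \<nu> k, \<xi> (Suc k)) \<in> \<delta>)}"

definition live_reachable ::
  "'x set \<Rightarrow> 'u set \<Rightarrow> 'y set \<Rightarrow> ('x \<times> 'u \<times> 'y \<times> 'x) set \<Rightarrow> 'x set \<Rightarrow> bool" where
  "live_reachable X U Y \<delta> X0 \<longleftrightarrow>
     (\<forall>x \<in> X0. \<exists>\<mu> \<nu> \<xi>. (\<mu>, \<nu>, \<xi>) \<in> full_behavior X U Y \<delta> X0 \<and> \<xi> 0 = x) \<and>
     (\<forall>x \<in> X. \<exists>\<mu> \<nu> \<xi> k. (\<mu>, \<nu>, \<xi>) \<in> full_behavior X U Y \<delta> X0 \<and> \<xi> k = x)"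

definition behavior ::
  "'x set \<Rightarrow> 'u set \<Rightarrow> 'y set \<Rightarrow> ('x \<times> 'u \<times> 'y \<times> 'x) set \<Rightarrow> 'x set
   \<Rightarrow> (int \<Rightarrow> 'y option) set" where
  "behavior X U Y \<delta> X0 = {w. \<exists>\<mu> \<nu> \<xi>. (\<mu>, \<nu>, \<xi>) \<in> full_behavior X U Y \<delta> X0 \<and>
     (\<forall>k::int. (k < 0 \<longrightarrow> w k = None) \<and> (k \<ge> 0 \<longrightarrow> w k = Some (\<nu> (nat k))))}"

definition state_behavior ::
  "'x set \<Rightarrow> 'u set \<Rightarrow> 'y set \<Rightarrow> ('x \<times> 'u \<times> 'y \<times> 'x) set \<Rightarrow> 'x set
   \<Rightarrow> ((int \<Rightarrow> 'y option) \<times> (int \<Rightarrow> 'x option)) set" where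
  "state_behavior X U Y \<delta> X0 = {(w, \<xi>). \<exists>\<mu> \<nu> \<xi>'. (\<mu>, \<nu>, \<xi>') \<in> full_behavior X U Y \<delta> X0 \<and>
     (\<forall>k::int. (k < 0 \<longrightarrow> w k = None \<and> \<xi> k = None) \<and>
               (k \<ge> 0 \<longrightarrow> w k = Some (\<nu> (nat k)) \<and> \<xi> k = Some (\<xi>' (nat k))))}"

definition sig_restr :: "(int \<Rightarrow> 'a) \<Rightarrow> int \<Rightarrow> int \<Rightarrow> 'a list" where
  "sig_restr w t1 t2 = map (\<lambda>i. w (t1 + int i)) [0..<nat (t2 - t1 + 1)]"

definition str_restr :: "'a list \<Rightarrow> nat \<Rightarrow> nat \<Rightarrow> 'a list" where
  "str_restr \<zeta> a b = map (\<lambda>i. \<zeta> ! i) [a..<Suc b]"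

definition Pi_l :: "nat \<Rightarrow> (int \<Rightarrow> 'a) set \<Rightarrow> 'a list set" where
  "Pi_l l B = (\<Union>k::nat. (\<lambda>s. sig_restr s (int k - int l + 1) (int k)) ` B)"

definition E_str ::
  "'x set \<Rightarrow> 'u set \<Rightarrow> 'y set \<Rightarrow> ('x \<times> 'u \<times> 'y \<times> 'x) set \<Rightarrow> 'x set
   \<Rightarrow> int \<Rightarrow> int \<Rightarrow> 'x \<Rightarrow> 'y option list set" where
  "E_str X U Y \<delta> X0 a b x = {\<zeta>. \<exists>w \<xi> k. (w, \<xi>) \<in> state_behavior X U Y \<delta> X0 \<and>
     \<xi> (int k) = Some x \<and> \<zeta> = sig_restr w (int k + a) (int k + b)}"

text \<open>I^l_m = [m-l, m-1].\<close>
definition future_unique ::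
  "'x set \<Rightarrow> 'u set \<Rightarrow> 'y set \<Rightarrow> ('x \<times> 'u \<times> 'y \<times> 'x) set \<Rightarrow> 'x set \<Rightarrow> nat \<Rightarrow> nat \<Rightarrow> bool" where
  "future_unique X U Y \<delta> X0 l m \<longleftrightarrow>
     (\<forall>x \<in> X. \<forall>\<zeta> \<in> E_str X U Y \<delta> X0 (int m - int l) (int m - 1) x.
        \<forall>\<zeta>' \<in> E_str X U Y \<delta> X0 (int m - int l) (int m - 1) x.
          str_restr \<zeta> (l - m) (l - 1) = str_restr \<zeta>' (l - m) (l - 1))"

definition quotient_states ::
  "'x set \<Rightarrow> 'u set \<Rightarrow> 'y set \<Rightarrow> ('x \<times> 'u \<times> 'y \<times> 'x) set \<Rightarrow> 'x set \<Rightarrow> nat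
   \<Rightarrow> 'y option list set set" where
  "quotient_states X U Y \<delta> X0 l = {E_str X U Y \<delta> X0 0 (int l - 1) x | x. x \<in> X}"

definition domino_consistent ::
  "'x set \<Rightarrow> 'u set \<Rightarrow> 'y set \<Rightarrow> ('x \<times> 'u \<times> 'y \<times> 'x) set \<Rightarrow> 'x set \<Rightarrow> nat \<Rightarrow> bool" where
  "domino_consistent X U Y \<delta> X0 l \<longleftrightarrow>
     (\<forall>\<zeta> \<in> Pi_l (Suc l) (behavior X U Y \<delta> X0).
        \<forall>yh \<in> quotient_states X U Y \<delta> X0 l.
          str_restr \<zeta> 0 (l - 1) \<in> yh \<longrightarrow>
          (\<exists>x \<in> X. E_str X U Y \<delta> X0 0 (int l - 1) x = yh \<and> \<zeta> \<in> E_str X U Y \<delta> X0 0 (int l) x))"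

end

theory Submission
  imports Defs
begin

text \<open>Future uniqueness w.r.t. the full window \<open>I\<^sup>l\<^sub>l = [0, l-1]\<close> says that every
  \<open>E\<^bsup>[0,l-1]\<^esup>(x)\<close> is a singleton or empty, so each quotient state \<open>\<hat>y\<close> is the
  singleton of one string.  A domino \<open>\<zeta>\<close> whose prefix lies in \<open>\<hat>y\<close> starts with
  a proper output symbol, so it is a window of a behavior at nonnegative times; the
  state \<open>x\<close> of that trajectory at the window's start has \<open>\<zeta> \<in> E\<^bsup>[0,l]\<^esup>(x)\<close> and
  the prefix of \<open>\<zeta>\<close> in \<open>E\<^bsup>[0,l-1]\<^esup>(x)\<close>, which forces \<open>E\<^bsup>[0,l-1]\<^esup>(x) = \<hat>y\<close>.\<close>

lemma length_sig_restr [simp]: "length (sig_restr w a b) = nat (b - a + 1)"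
  by (simp add: sig_restr_def)

lemma nth_sig_restr [simp]: "i < nat (b - a + 1) \<Longrightarrow> sig_restr w a b ! i = w (a + int i)"
  by (simp add: sig_restr_def)

lemma str_restr_full: "1 \<le> length \<zeta> \<Longrightarrow> str_restr \<zeta> 0 (length \<zeta> - 1) = \<zeta>"
  by (rule nth_equalityI) (auto simp: str_restr_def simp del: upt_Suc)

lemma nth_0_str_restr_0: "str_restr \<zeta> 0 b ! 0 = \<zeta> ! 0"
  by (simp add: str_restr_def del: upt_Suc)

lemma str_restr_prefix_sig_restr:
  "1 \<le> n \<Longrightarrow> str_restr (sig_restr w a (a + int n)) 0 (n - 1) = sig_restr w a (a + int n - 1)"
  by (rule nth_equalityI) (auto simp: str_restr_def)

lemma length_E_str: "\<zeta> \<in> E_str X U Y \<delta> X0 a b x \<Longrightarrow> length \<zeta> = nat (b - a + 1)"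
  by (auto simp: E_str_def)

lemma E_str_nth_0_not_None:
  assumes "\<zeta> \<in> E_str X U Y \<delta> X0 0 b x" and "0 \<le> b"
  shows "\<zeta> ! 0 \<noteq> None"
proof -
  obtain w \<xi> k where "(w, \<xi>) \<in> state_behavior X U Y \<delta> X0"
    and "\<zeta> = sig_restr w (int k) (int k + b)"
    using assms(1) by (auto simp: E_str_def)
  with assms(2) show ?thesis
    by (auto simp: state_behavior_def)
qed

lemma behavior_windows_in_E_str:
  assumes "w \<in> behavior X U Y \<delta> X0"
  obtains x where "x \<in> X" and "\<And>a b. sig_restr w (int j + a) (int j + b) \<in> E_str X U Y \<delta> X0 a b x"
proof -
  obtain \<mu> \<nu> \<xi> where fb: "(\<mu>, \<nu>, \<xi>) \<in> full_behavior X U Y \<delta> X0"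
    and w: "\<forall>k::int. (k < 0 \<longrightarrow> w k = None) \<and> (k \<ge> 0 \<longrightarrow> w k = Some (\<nu> (nat k)))"
    using assms by (auto simp: behavior_def)
  define \<xi>' where "\<xi>' = (\<lambda>i. if i < 0 then None else Some (\<xi> (nat i)))"
  have "(w, \<xi>') \<in> state_behavior X U Y \<delta> X0"
    unfolding state_behavior_def using fb w by (auto simp: \<xi>'_def)
  moreover have "\<xi>' (int j) = Some (\<xi> j)"
    by (simp add: \<xi>'_def)
  moreover have "\<xi> j \<in> X"
    using fb by (auto simp: full_behavior_def)
  ultimately show ?thesis
    using that unfolding E_str_def by blast
qed

lemma Pi_l_behavior_defined_start:
  assumes "\<zeta> \<in> Pi_l (Suc l) (behavior X U Y \<delta> X0)" and "\<zeta> ! 0 \<noteq> None"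
  obtains w j where "w \<in> behavior X U Y \<delta> X0" and "\<zeta> = sig_restr w (int j) (int j + int l)"
proof -
  obtain k w where w: "w \<in> behavior X U Y \<delta> X0" and \<zeta>: "\<zeta> = sig_restr w (int k - int l) (int k)"
    using assms(1) by (auto simp: Pi_l_def)
  have "w (int k - int l) \<noteq> None"
    using assms(2) \<zeta> by simp
  then have "\<not> int k - int l < 0"
    using w by (auto simp: behavior_def)
  then have "l \<le> k"
    by simp
  with \<zeta> have "\<zeta> = sig_restr w (int (k - l)) (int (k - l) + int l)"
    by (simp add: of_nat_diff)
  with w that show ?thesis by blast
qed

lemma future_unique_full_window_E_str_singleton:
  assumes "future_unique X U Y \<delta> X0 l l" and "x \<in> X"
    and "p \<in> E_str X U Y \<delta> X0 0 (int l - 1) x"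
  shows "E_str X U Y \<delta> X0 0 (int l - 1) x = {p}"
proof -
  have "\<zeta> = p" if \<zeta>: "\<zeta> \<in> E_str X U Y \<delta> X0 0 (int l - 1) x" for \<zeta>
  proof (cases "l = 0")
    case True
    then show ?thesis using length_E_str[OF \<zeta>] length_E_str[OF assms(3)] by simp
  next
    case False
    have "\<forall>x \<in> X. \<forall>\<zeta> \<in> E_str X U Y \<delta> X0 0 (int l - 1) x.
        \<forall>\<zeta>' \<in> E_str X U Y \<delta> X0 0 (int l - 1) x. str_restr \<zeta> 0 (l - 1) = str_restr \<zeta>' 0 (l - 1)"
      using assms(1) unfolding future_unique_def by (simp only: diff_self diff_self_eq_0)
    then have "str_restr \<zeta> 0 (l - 1) = str_restr p 0 (l - 1)"
      using assms(2,3) \<zeta> by blast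
    moreover have "str_restr \<zeta> 0 (l - 1) = \<zeta>" "str_restr p 0 (l - 1) = p"
      using length_E_str[OF \<zeta>] length_E_str[OF assms(3)] False
        str_restr_full[of \<zeta>] str_restr_full[of p] by simp_all
    ultimately show ?thesis
      by simp
  qed
  with assms(3) show ?thesis by blast
qed

theorem lemma11:
  fixes X :: "'x set" and U :: "'u set" and Y :: "'y set"
    and \<delta> :: "('x \<times> 'u \<times> 'y \<times> 'x) set" and X0 :: "'x set" and l :: nat
  assumes "state_machine X U Y \<delta> X0"
    and "live_reachable X U Y \<delta> X0"
    and "\<forall>x \<in> X. \<forall>u \<in> U. \<forall>y \<in> Y. \<forall>x' \<in> X.
           (x, u, y, x') \<in> \<delta> \<longleftrightarrow> (x' \<in> F_next \<delta> x u \<and> y \<in> H_out \<delta> x)"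
    and "finite Y"
    and "l \<ge> 1"
    and "future_unique X U Y \<delta> X0 l l"
  shows "domino_consistent X U Y \<delta> X0 l"
  unfolding domino_consistent_def
proof (intro ballI impI)
  let ?E = "E_str X U Y \<delta> X0 0 (int l - 1)"
  fix \<zeta> yh
  assume \<zeta>: "\<zeta> \<in> Pi_l (Suc l) (behavior X U Y \<delta> X0)"
    and "yh \<in> quotient_states X U Y \<delta> X0 l" and prefix: "str_restr \<zeta> 0 (l - 1) \<in> yh"
  then obtain x0 where "x0 \<in> X" and yh: "yh = ?E x0"
    by (auto simp: quotient_states_def)
  have "str_restr \<zeta> 0 (l - 1) ! 0 \<noteq> None"
    by (rule E_str_nth_0_not_None[of _ X U Y \<delta> X0 "int l - 1" x0]) (use prefix yh assms(5) in auto)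
  then have "\<zeta> ! 0 \<noteq> None"
    by (simp add: nth_0_str_restr_0)
  then obtain w j where w: "w \<in> behavior X U Y \<delta> X0" and \<zeta>w: "\<zeta> = sig_restr w (int j) (int j + int l)"
    using \<zeta> Pi_l_behavior_defined_start by blast
  obtain x where x: "x \<in> X"
    and windows: "\<And>a b. sig_restr w (int j + a) (int j + b) \<in> E_str X U Y \<delta> X0 a b x"
    using behavior_windows_in_E_str[OF w] by blast
  have "str_restr \<zeta> 0 (l - 1) = sig_restr w (int j) (int j + int l - 1)"
    using \<zeta>w str_restr_prefix_sig_restr[OF assms(5)] by blast
  then have "str_restr \<zeta> 0 (l - 1) \<in> ?E x"
    using windows[of 0 "int l - 1"] by (simp add: add_diff_eq)
  then have "?E x = yh"
    using future_unique_full_window_E_str_singleton[OF assms(6)] x \<open>x0 \<in> X\<close> prefix yh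
    by metis
  moreover have "\<zeta> \<in> E_str X U Y \<delta> X0 0 (int l) x"
    using windows[of 0 "int l"] \<zeta>w by simp
  ultimately show "\<exists>x\<in>X. ?E x = yh \<and> \<zeta> \<in> E_str X U Y \<delta> X0 0 (int l) x"
    using x by blast
qed

end
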